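(* Let $G\ge 6$. For $p\in(0,1)$, let $r_1,\dots,r_G$ be i.i.d. $\mathrm{Bernoulli}(p)$, $R=\sum_j r_j$, $\hat p=R/G$, $\hat A_i=r_i-\hat p$, $A_i=r_i-p$, $\mathcal S=\{1\le R\le G-1\}$. For an interval $I\subseteq[0,1]$ of positive length and event $E$, set $\mathbb P(E\mid\mathcal S,\ p\in I):=\frac{1}{|I|}\int_I \mathbb P_p(E\mid\mathcal S)\,dp$. Then for every $i\in[G]$, \[ \mathbb P\!\left(\hat A_i<A_i\mid\mathcal S,\ p<\tfrac{2}{G}\right)>0.78,\qquad \mathbb P\!\left(\hat A_i>A_i\mid\mathcal S,\ p>\tfrac{G-2}{G}\right)>0.78. \]
   Context: Binary-reward group setting with group baseline $\hat p$, group-relative advantage $\hat A_i$, expected advantage $A_i$, and non-degenerate event $\mathcal S$; the expected reward $p$ is assumed uniformly distributed, and conditioning on $p$ lying in a subinterval means averaging the conditional probability given $\mathcal S$ uniformly over that subinterval. *)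

theory Defs
  imports "HOL-Probability.Probability"
begin

text \<open>Outcomes are reward vectors r indexed by 1..G (True = reward 1).
  Under expected reward p the r_j are i.i.d. Bernoulli(p).\<close>
definition bern_vec :: "nat \<Rightarrow> real \<Rightarrow> (nat \<Rightarrow> bool) pmf" where
  "bern_vec G p = Pi_pmf {1..G} False (\<lambda>_. bernoulli_pmf p)"

definition Rsum :: "nat \<Rightarrow> (nat \<Rightarrow> bool) \<Rightarrow> real" where
  "Rsum G r = (\<Sum>j\<in>{1..G}. of_bool (r j))"

definition phat :: "nat \<Rightarrow> (nat \<Rightarrow> bool) \<Rightarrow> real" where
  "phat G r = Rsum G r / real G"

definition Ahat :: "nat \<Rightarrow> nat \<Rightarrow> (nat \<Rightarrow> bool) \<Rightarrow> real" where
  "Ahat G i r = of_bool (r i) - phat G r"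

definition Aexp :: "real \<Rightarrow> nat \<Rightarrow> (nat \<Rightarrow> bool) \<Rightarrow> real" where
  "Aexp p i r = of_bool (r i) - p"

definition nondeg :: "nat \<Rightarrow> (nat \<Rightarrow> bool) set" where
  "nondeg G = {r. 1 \<le> Rsum G r \<and> Rsum G r \<le> real G - 1}"

definition cond_prob :: "nat \<Rightarrow> real \<Rightarrow> (nat \<Rightarrow> bool) set \<Rightarrow> real" where
  "cond_prob G p E =
     measure_pmf.prob (bern_vec G p) (E \<inter> nondeg G) / measure_pmf.prob (bern_vec G p) (nondeg G)"

text \<open>P(E | S, p \<in> I) for I = (a,b): uniform average of P_p(E_p | S) over I.
  The event may depend on p (as A_i does).\<close>
definition cond_prob_avg ::
    "nat \<Rightarrow> real \<Rightarrow> real \<Rightarrow> (real \<Rightarrow> (nat \<Rightarrow> bool) set) \<Rightarrow> real" where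
  "cond_prob_avg G a b E = integral {a<..<b} (\<lambda>p. cond_prob G p (E p)) / (b - a)"

end

theory Submission
  imports Defs
begin

(*
  Given S, the event Ahat_i < A_i is phat > p, i.e. R > G p.  For p < 1/G this holds on all of S,
  and for 1/G <= p < 2/G it fails exactly when R = 1, so the first average equals
  1 - (G/2) * (integral over [1/G, 2/G] of P_p(R = 1 | S)); the second average is the same number
  by the symmetry r -> 1 - r, p -> 1 - p.  With W(p) = 1 - (1 - p)^G one has
  P_p(R = 1 | S) <= kappa * p * (ln W)'(p), where kappa close to 1 absorbs the term p^G, and
  concavity of ln W bounds the integral of p * (ln W)' over [a, b] by (a + b)/2 * (ln W(b) - ln W(a)).
  Cutting [1/G, 2/G] into eight pieces leaves a weighted sum of increments of ln W, which has to be
  below about 0.439.  For G <= 11 this is a finite computation (with a Pade bound for ln); for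
  G >= 12 the sum is compared with its limit, where W((8 + k)/(8G)) becomes 1 - exp(-(8 + k)/8),
  and the difference is bounded by an explicit cubic in 1/G.
*)

section \<open>Reduction to the binomial distribution\<close>

lemma Rsum_eq_card: "Rsum G r = real (card {j\<in>{1..G}. r j})"
proof -
  have "(\<Sum>j\<in>{1..G}. of_bool (r j) :: real) = (\<Sum>j\<in>{j\<in>{1..G}. r j}. 1)"
    by (intro sum.mono_neutral_cong_right) auto
  then show ?thesis
    unfolding Rsum_def by simp
qed

lemma prob_bern_vec_Rsum:
  assumes "p \<in> {0..1}"
  shows "measure_pmf.prob (bern_vec G p) {r. Q (Rsum G r)}
           = (\<Sum>k | k \<le> G \<and> Q (real k). pmf (binomial_pmf G p) k)"
proof -
  have "binomial_pmf G p = map_pmf (\<lambda>r. card {j\<in>{1..G}. r j}) (bern_vec G p)"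
    unfolding bern_vec_def using assms by (intro binomial_pmf_altdef') auto
  then have "measure_pmf.prob (bern_vec G p) {r. Q (Rsum G r)}
               = measure_pmf.prob (binomial_pmf G p) {k. Q (real k)}"
    by (simp add: Rsum_eq_card vimage_def)
  also have "\<dots> = measure_pmf.prob (binomial_pmf G p) {k. k \<le> G \<and> Q (real k)}"
    using assms by (intro measure_prob_cong_0) (auto simp: set_pmf_binomial_eq split: if_splits)
  also have "\<dots> = (\<Sum>k | k \<le> G \<and> Q (real k). pmf (binomial_pmf G p) k)"
    by (rule measure_measure_pmf_finite) auto
  finally show ?thesis .
qed

lemma cond_prob_Rsum:
  assumes "p \<in> {0..1}"
  shows "cond_prob G p {r. Q (Rsum G r)}
           = (\<Sum>k | k \<in> {1..<G} \<and> Q (real k). pmf (binomial_pmf G p) k)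
             / (\<Sum>k\<in>{1..<G}. pmf (binomial_pmf G p) k)"
proof -
  have "measure_pmf.prob (bern_vec G p) ({r. Q (Rsum G r)} \<inter> nondeg G)
          = measure_pmf.prob (bern_vec G p)
              {r. (\<lambda>x. Q x \<and> 1 \<le> x \<and> x \<le> real G - 1) (Rsum G r)}"
    unfolding nondeg_def by (rule arg_cong) auto
  also have "\<dots> = (\<Sum>k | k \<le> G \<and> Q (real k) \<and> 1 \<le> real k \<and> real k \<le> real G - 1.
                       pmf (binomial_pmf G p) k)"
    by (rule prob_bern_vec_Rsum[OF assms])
  also have "{k. k \<le> G \<and> Q (real k) \<and> 1 \<le> real k \<and> real k \<le> real G - 1}
               = {k. k \<in> {1..<G} \<and> Q (real k)}"
    by auto
  finally have num: "measure_pmf.prob (bern_vec G p) ({r. Q (Rsum G r)} \<inter> nondeg G)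
                       = (\<Sum>k | k \<in> {1..<G} \<and> Q (real k). pmf (binomial_pmf G p) k)" .
  have "measure_pmf.prob (bern_vec G p) (nondeg G)
          = measure_pmf.prob (bern_vec G p) {r. (\<lambda>x. 1 \<le> x \<and> x \<le> real G - 1) (Rsum G r)}"
    unfolding nondeg_def by simp
  also have "\<dots> = (\<Sum>k | k \<le> G \<and> 1 \<le> real k \<and> real k \<le> real G - 1.
                       pmf (binomial_pmf G p) k)"
    by (rule prob_bern_vec_Rsum[OF assms])
  also have "{k. k \<le> G \<and> 1 \<le> real k \<and> real k \<le> real G - 1} = {1..<G}"
    by auto
  finally have "measure_pmf.prob (bern_vec G p) (nondeg G) = (\<Sum>k\<in>{1..<G}. pmf (binomial_pmf G p) k)" .
  with num show ?thesis
    unfolding cond_prob_def by simp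
qed

definition prob_nondeg :: "nat \<Rightarrow> real \<Rightarrow> real" where
  "prob_nondeg G p = 1 - (1 - p)^G - p^G"

lemma sum_pmf_binomial_nondeg:
  assumes "p \<in> {0..1}" and "G \<ge> 1"
  shows "(\<Sum>k\<in>{1..<G}. pmf (binomial_pmf G p) k) = prob_nondeg G p"
proof -
  have "{..G} = insert 0 (insert G {1..<G})"
    using assms by auto
  then have "(\<Sum>k\<le>G. pmf (binomial_pmf G p) k)
               = pmf (binomial_pmf G p) 0 + pmf (binomial_pmf G p) G + (\<Sum>k\<in>{1..<G}. pmf (binomial_pmf G p) k)"
    using assms by simp
  moreover have "(\<Sum>k\<le>G. pmf (binomial_pmf G p) k) = 1"
    using assms by (intro sum_pmf_eq_1) (auto simp: set_pmf_binomial_eq)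
  ultimately show ?thesis
    using assms by (simp add: prob_nondeg_def)
qed

lemma prob_nondeg_pos:
  assumes "0 < p" "p < 1" "G \<ge> 2"
  shows "prob_nondeg G p > 0"
proof -
  have "(1 - p)^G \<le> (1 - p)^1"
    using assms by (intro power_decreasing) auto
  moreover have "p^G < p^1"
    using assms by (intro power_strict_decreasing) auto
  ultimately show ?thesis
    unfolding prob_nondeg_def by simp
qed

lemma sum_pmf_binomial_reflect:
  assumes "p \<in> {0..1}"
  shows "(\<Sum>k\<in>{k\<in>{1..<G}. Q (real k)}. pmf (binomial_pmf G (1 - p)) k)
           = (\<Sum>k\<in>{k\<in>{1..<G}. Q (real G - real k)}. pmf (binomial_pmf G p) k)"
proof -
  have "pmf (binomial_pmf G (1 - p)) (G - k) = pmf (binomial_pmf G p) k"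
    and "pmf (binomial_pmf G p) (G - k) = pmf (binomial_pmf G (1 - p)) k" if "k \<le> G" for k
    using assms that binomial_symmetric[OF that] by (simp_all add: mult_ac)
  then show ?thesis
    by (intro sum.reindex_bij_witness[of _ "\<lambda>k. G - k" "\<lambda>k. G - k"]) (auto simp: of_nat_diff)
qed

lemma cond_prob_reflect:
  assumes "p \<in> {0..1}"
  shows "cond_prob G (1 - p) {r. Q (Rsum G r)} = cond_prob G p {r. Q (real G - Rsum G r)}"
proof -
  have "{k\<in>{1..<G}. True} = {1..<G}"
    by auto
  then have "(\<Sum>k\<in>{1..<G}. pmf (binomial_pmf G (1 - p)) k) = (\<Sum>k\<in>{1..<G}. pmf (binomial_pmf G p) k)"
    using sum_pmf_binomial_reflect[OF assms, of G "\<lambda>_. True"] by simp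
  moreover have "1 - p \<in> {0..1}"
    using assms by auto
  ultimately show ?thesis
    using cond_prob_Rsum[OF assms, of G "\<lambda>x. Q (real G - x)"] cond_prob_Rsum[of "1 - p" G Q]
      sum_pmf_binomial_reflect[OF assms, of G Q]
    by simp
qed

section \<open>Averaging over p\<close>

definition prob_overestimate :: "nat \<Rightarrow> real \<Rightarrow> real" where
  "prob_overestimate G p = cond_prob G p {r. p < phat G r}"

definition prob_one_success :: "nat \<Rightarrow> real \<Rightarrow> real" where
  "prob_one_success G p = real G * p * (1 - p)^(G - 1) / prob_nondeg G p"

lemma Ahat_less_Aexp_iff: "Ahat G i r < Aexp p i r \<longleftrightarrow> p < phat G r"
  by (auto simp: Ahat_def Aexp_def)

lemma Aexp_less_Ahat_iff: "Aexp p i r < Ahat G i r \<longleftrightarrow> phat G r < p"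
  by (auto simp: Ahat_def Aexp_def)

lemma prob_underestimate_eq_reflect:
  assumes "p \<in> {0..1}" and "G > 0"
  shows "cond_prob G p {r. phat G r < p} = prob_overestimate G (1 - p)"
proof -
  have "prob_overestimate G (1 - p) = cond_prob G (1 - p) {r. (\<lambda>x. 1 - p < x / G) (Rsum G r)}"
    unfolding prob_overestimate_def phat_def by simp
  also have "\<dots> = cond_prob G p {r. 1 - p < (real G - Rsum G r) / G}"
    by (rule cond_prob_reflect[OF assms(1)])
  also have "{r. 1 - p < (real G - Rsum G r) / G} = {r. phat G r < p}"
    using assms(2) by (auto simp: phat_def field_simps)
  finally show ?thesis ..
qed

lemma prob_overestimate_eq_sum:
  assumes "p \<in> {0..1}" and "G > 0"
  shows "prob_overestimate G p
           = (\<Sum>k | k \<in> {1..<G} \<and> real G * p < real k. pmf (binomial_pmf G p) k) / prob_nondeg G p"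
proof -
  have "{r. p < phat G r} = {r. (\<lambda>x. real G * p < x) (Rsum G r)}"
    using assms(2) by (auto simp: phat_def field_simps)
  then show ?thesis
    unfolding prob_overestimate_def
    using cond_prob_Rsum[OF assms(1)] sum_pmf_binomial_nondeg[OF assms(1)] assms(2) by simp
qed

lemma prob_overestimate_small_p:
  assumes "0 < p" and "real G * p < 1" and "G \<ge> 2"
  shows "prob_overestimate G p = 1"
proof -
  have "p \<le> real G * p"
    using assms by (simp add: mult_le_cancel_right1)
  then have "p < 1"
    using assms(2) by linarith
  then have p: "p \<in> {0..1}" "p < 1"
    using assms(1) by auto
  have "real G * p < real k" if "1 \<le> k" for k
  proof -
    have "1 \<le> real k"
      using that by simp
    then show ?thesis
      using assms(2) by linarith
  qed
  then have "{k. k \<in> {1..<G} \<and> real G * p < real k} = {1..<G}"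
    by auto
  then have "prob_overestimate G p = (\<Sum>k\<in>{1..<G}. pmf (binomial_pmf G p) k) / prob_nondeg G p"
    using prob_overestimate_eq_sum[OF p(1)] assms(3) by simp
  also have "\<dots> = 1"
    using sum_pmf_binomial_nondeg[OF p(1)] prob_nondeg_pos[OF assms(1) p(2) assms(3)] assms(3) by simp
  finally show ?thesis .
qed

lemma prob_overestimate_moderate_p:
  assumes "1 \<le> real G * p" and "real G * p < 2" and "G \<ge> 2"
  shows "prob_overestimate G p = 1 - prob_one_success G p"
proof -
  have "0 < real G * p"
    using assms(1) by linarith
  then have "0 < p"
    by (simp add: zero_less_mult_iff)
  moreover have "2 * p \<le> real G * p"
    using assms(3) \<open>0 < p\<close> by (intro mult_right_mono) auto
  ultimately have "p < 1"
    using assms(2) by linarith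
  with \<open>0 < p\<close> have p: "0 < p" "p < 1" "p \<in> {0..1}"
    by auto
  have iff: "real G * p < real k \<longleftrightarrow> 2 \<le> k" for k
  proof
    assume "real G * p < real k"
    then show "2 \<le> k"
      using assms(1) by linarith
  next
    assume "2 \<le> k"
    then show "real G * p < real k"
      using assms(2) by linarith
  qed
  have "{k. k \<in> {1..<G} \<and> real G * p < real k} = {k. k \<in> {1..<G} \<and> 2 \<le> k}"
    by (intro Collect_cong conj_cong refl iff)
  also have "\<dots> = {2..<G}"
    by auto
  finally have "{k. k \<in> {1..<G} \<and> real G * p < real k} = {2..<G}" .
  then have "prob_overestimate G p = (\<Sum>k\<in>{2..<G}. pmf (binomial_pmf G p) k) / prob_nondeg G p"
    using prob_overestimate_eq_sum[OF p(3)] assms(3) by simp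
  also have "(\<Sum>k\<in>{2..<G}. pmf (binomial_pmf G p) k) = prob_nondeg G p - G * p * (1 - p)^(G - 1)"
  proof -
    have "{1..<G} = insert 1 {2..<G}"
      using assms(3) by auto
    then have "(\<Sum>k\<in>{1..<G}. pmf (binomial_pmf G p) k)
                 = pmf (binomial_pmf G p) 1 + (\<Sum>k\<in>{2..<G}. pmf (binomial_pmf G p) k)"
      by simp
    then show ?thesis
      using sum_pmf_binomial_nondeg[OF p(3)] p assms(3) by simp
  qed
  finally show ?thesis
    using prob_nondeg_pos[OF p(1,2) assms(3)]
    unfolding prob_one_success_def by (simp add: diff_divide_distrib)
qed

lemma continuous_on_prob_one_success:
  assumes "0 < a" and "b < 1" and "G \<ge> 2"
  shows "continuous_on {a..b} (prob_one_success G)"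
proof -
  have "continuous_on {a..b} (prob_nondeg G)"
    unfolding prob_nondeg_def by (intro continuous_intros)
  moreover have "prob_nondeg G p \<noteq> 0" if "p \<in> {a..b}" for p
    using prob_nondeg_pos[of p G] that assms by auto
  ultimately show ?thesis
    unfolding prob_one_success_def by (intro continuous_intros) auto
qed

lemma integrable_prob_one_success:
  assumes "G \<ge> 3"
  shows "prob_one_success G integrable_on {1/G..2/G}"
  using assms by (intro integrable_continuous_interval continuous_on_prob_one_success) (auto simp: field_simps)

lemma has_integral_prob_overestimate:
  assumes "G \<ge> 3" and J: "(prob_one_success G has_integral J) {1/G..2/G}"
  shows "(prob_overestimate G has_integral 2/G - J) {0..2/G}"
proof -
  have le: "0 \<le> 1 / real G" "1 / real G \<le> 2 / real G"
    by (auto simp: divide_right_mono)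
  have "(prob_overestimate G has_integral 1/G) {0..1/G}"
  proof (rule has_integral_spike_finite)
    show "((\<lambda>_. 1) has_integral 1/G) {0..1/G}"
      using has_integral_const_real[of "1::real" 0 "1/G"] by simp
    fix p assume "p \<in> {0..1/G} - {0, 1/G}"
    then have "0 < p" "real G * p < 1"
      using assms by (auto simp: field_simps)
    then show "prob_overestimate G p = 1"
      using prob_overestimate_small_p assms by simp
  qed simp
  moreover have "(prob_overestimate G has_integral 1/G - J) {1/G..2/G}"
  proof (rule has_integral_spike_finite)
    show "((\<lambda>p. 1 - prob_one_success G p) has_integral 1/G - J) {1/G..2/G}"
      using has_integral_diff[OF has_integral_const_real[of "1::real" "1/G" "2/G"] J] le(2) by simp
    fix p assume "p \<in> {1/G..2/G} - {2/G}"
    then have "1 \<le> real G * p" "real G * p < 2"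
      using assms by (auto simp: field_simps)
    then show "prob_overestimate G p = 1 - prob_one_success G p"
      using prob_overestimate_moderate_p assms by simp
  qed simp
  ultimately show ?thesis
    using has_integral_combine[OF le] by fastforce
qed

lemma integral_reflect_shift_real:
  "integral {a..b} (\<lambda>x. f (c - x)) = integral {c - b..c - a} (f :: real \<Rightarrow> real)"
proof -
  have "(\<lambda>x. f (c - x)) = (\<lambda>y. f (- y)) \<circ> (+) (- c)"
    by (simp add: fun_eq_iff)
  then have "integral {a..b} (\<lambda>x. f (c - x)) = integral {a + - c..b + - c} (\<lambda>y. f (- y))"
    by (simp only: integral_shift_Icc_real)
  also have "{a + - c..b + - c} = {- (c - a)..- (c - b)}"
    by simp
  also have "integral \<dots> (\<lambda>y. f (- y)) = integral {c - b..c - a} f"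
    by (rule Henstock_Kurzweil_Integration.integral_reflect_real)
  finally show ?thesis .
qed

lemma cond_prob_avg_overestimate:
  assumes "G \<ge> 3" and "(prob_one_success G has_integral J) {1/G..2/G}"
  shows "cond_prob_avg G 0 (2/G) (\<lambda>p. {r. p < phat G r}) = 1 - G * J / 2"
proof -
  have "cond_prob_avg G 0 (2/G) (\<lambda>p. {r. p < phat G r}) = integral {0..2/G} (prob_overestimate G) / (2/G)"
    unfolding cond_prob_avg_def prob_overestimate_def by (simp add: integral_open_interval_real)
  also have "\<dots> = (2/G - J) / (2/G)"
    using has_integral_prob_overestimate[OF assms] by (simp add: integral_unique)
  also have "\<dots> = 1 - G * J / 2"
    using assms(1) by (simp add: field_simps)
  finally show ?thesis .
qed

lemma cond_prob_avg_underestimate_eq: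
  assumes "G \<ge> 2"
  shows "cond_prob_avg G ((real G - 2) / G) 1 (\<lambda>p. {r. phat G r < p})
           = cond_prob_avg G 0 (2/G) (\<lambda>p. {r. p < phat G r})"
proof -
  have "integral {(real G - 2) / G<..<1} (\<lambda>p. cond_prob G p {r. phat G r < p})
          = integral {(real G - 2) / G<..<1} (\<lambda>p. prob_overestimate G (1 - p))"
  proof (rule integral_cong)
    fix p assume p: "p \<in> {(real G - 2) / G<..<1}"
    have "0 \<le> (real G - 2) / G"
      using assms by simp
    then have "p \<in> {0..1}"
      using p by auto
    then show "cond_prob G p {r. phat G r < p} = prob_overestimate G (1 - p)"
      using prob_underestimate_eq_reflect[of p G] assms by simp
  qed
  also have "\<dots> = integral {0..2/G} (prob_overestimate G)"
    using integral_reflect_shift_real[of "(real G - 2) / G" 1 "prob_overestimate G" 1] assms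
    by (simp add: integral_open_interval_real[symmetric] field_simps)
  finally have "integral {(real G - 2) / G<..<1} (\<lambda>p. cond_prob G p {r. phat G r < p})
                  = integral {0<..<2/G} (\<lambda>p. cond_prob G p {r. p < phat G r})"
    unfolding prob_overestimate_def by (simp add: integral_open_interval_real)
  moreover have "1 - (real G - 2) / G = 2/G - 0"
    using assms by (simp add: field_simps)
  ultimately show ?thesis
    unfolding cond_prob_avg_def by (simp only:)
qed

section \<open>Bounding the integral of P(R = 1 | S)\<close>

definition ln_prob_any_success :: "nat \<Rightarrow> real \<Rightarrow> real" where
  "ln_prob_any_success G p = ln (1 - (1 - p)^G)"

lemma one_minus_pow_pos:
  assumes "0 < p" and "p < 1" and "G \<ge> 1"
  shows "0 < 1 - (1 - p :: real)^G"
proof -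
  have "(1 - p)^G \<le> (1 - p)^1"
    using assms by (intro power_decreasing) auto
  then show ?thesis
    using assms(1) by simp
qed

lemma has_real_derivative_ln_prob_any_success:
  assumes "0 < p" and "p < 1" and "G \<ge> 1"
  shows "(ln_prob_any_success G has_real_derivative
           real G * (1 - p)^(G - 1) / (1 - (1 - p)^G)) (at p)"
  unfolding ln_prob_any_success_def
  using one_minus_pow_pos[OF assms] by (auto intro!: derivative_eq_intros simp: field_simps)

lemma concave_on_ln_prob_any_success:
  assumes "G \<ge> 2"
  shows "concave_on {0<..<1} (ln_prob_any_success G)"
proof (rule f''_le0_imp_concave)
  fix p :: real assume "p \<in> {0<..<1}"
  then have p: "0 < p" "p < 1"
    by auto
  define W where "W = 1 - (1 - p)^G"
  have W: "0 < W"
    unfolding W_def using one_minus_pow_pos[OF p] assms by simp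
  show "(ln_prob_any_success G has_real_derivative
          real G * (1 - p)^(G - 1) / (1 - (1 - p)^G)) (at p)"
    using has_real_derivative_ln_prob_any_success[OF p] assms by simp
  have "(1 - p)^(G - 1) = (1 - p) * (1 - p)^(G - 2)"
    using assms by (simp flip: power_Suc add: Suc_diff_Suc numeral_2_eq_2)
  then show "((\<lambda>p. real G * (1 - p)^(G - 1) / (1 - (1 - p)^G)) has_real_derivative
      - (real G * real (G - 1) * (1 - p)^(G - 2) * W + (real G * (1 - p)^(G - 1))^2) / W^2) (at p)"
    using W assms unfolding W_def
    by (auto intro!: derivative_eq_intros simp: field_simps power2_eq_square numeral_2_eq_2)
  have "0 \<le> real G * real (G - 1) * (1 - p)^(G - 2) * W + (real G * (1 - p)^(G - 1))^2"
    using W p by (intro add_nonneg_nonneg mult_nonneg_nonneg) auto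
  then have "0 \<le> (real G * real (G - 1) * (1 - p)^(G - 2) * W + (real G * (1 - p)^(G - 1))^2) / W^2"
    by simp
  then show "- (real G * real (G - 1) * (1 - p)^(G - 2) * W + (real G * (1 - p)^(G - 1))^2) / W^2 \<le> 0"
    unfolding minus_divide_left[symmetric] by linarith
qed simp

text \<open>The primitive p L(p) - p L(a) - s (p - a)^2/2, with s the slope of the chord of L over
  [a, b], has derivative at least p L'(p) because the concave L lies above that chord.\<close>
lemma has_integral_le_of_concave:
  fixes L D \<phi> :: "real \<Rightarrow> real"
  assumes "a < b" and "concave_on {a..b} L"
    and deriv: "\<And>p. p \<in> {a..b} \<Longrightarrow> (L has_real_derivative D p) (at p)"
    and int: "(\<phi> has_integral I) {a..b}"
    and le: "\<And>p. p \<in> {a..b} \<Longrightarrow> \<phi> p \<le> p * D p"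
  shows "I \<le> (a + b) / 2 * (L b - L a)"
proof -
  define s where "s = (L b - L a) / (b - a)"
  define \<Phi> where "\<Phi> p = p * L p - p * L a - s * (p - a)^2 / 2" for p
  define \<Phi>' where "\<Phi>' p = L p + p * D p - L a - s * (p - a)" for p
  have \<Phi>_deriv: "(\<Phi> has_real_derivative \<Phi>' p) (at p)" if "p \<in> {a..b}" for p
    unfolding \<Phi>_def[abs_def] \<Phi>'_def using deriv[OF that]
    by (auto intro!: derivative_eq_intros)
  have ftc: "(\<Phi>' has_integral (\<Phi> b - \<Phi> a)) {a..b}"
    using assms(1) by (intro fundamental_theorem_of_calculus)
      (auto intro!: has_field_derivative_at_within \<Phi>_deriv
            simp: has_real_derivative_iff_has_vector_derivative[symmetric])
  have "\<phi> p \<le> \<Phi>' p" if "p \<in> {a..b}" for p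
    using le[OF that] concave_onD_Icc'[OF assms(2) that] unfolding \<Phi>'_def s_def by simp
  then have "I \<le> \<Phi> b - \<Phi> a"
    using has_integral_le[OF int ftc] by simp
  also have "\<Phi> b - \<Phi> a = (a + b) / 2 * (L b - L a)"
    unfolding \<Phi>_def s_def using assms(1) by (simp add: field_simps power2_eq_square)
  finally show ?thesis .
qed

lemma prob_one_success_le:
  assumes "0 < p" and "p < 1" and "G \<ge> 2"
    and "\<kappa> * p^G \<le> (\<kappa> - 1) * (1 - (1 - p)^G)"
  shows "prob_one_success G p \<le> p * (\<kappa> * (real G * (1 - p)^(G - 1) / (1 - (1 - p)^G)))"
proof -
  define N where "N = real G * p * (1 - p)^(G - 1)"
  define W where "W = 1 - (1 - p)^G"
  have N: "0 \<le> N"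
    unfolding N_def using assms by simp
  have W: "0 < W"
    unfolding W_def using one_minus_pow_pos[of p G] assms by simp
  have S: "0 < W - p^G"
    using prob_nondeg_pos[OF assms(1-3)] unfolding prob_nondeg_def W_def by simp
  have "N * W \<le> \<kappa> * N * (W - p^G)"
    using mult_left_mono[OF assms(4) N] unfolding W_def by (simp add: algebra_simps)
  then have "N / (W - p^G) \<le> \<kappa> * N / W"
    using W S by (simp add: field_simps)
  then show ?thesis
    unfolding prob_one_success_def prob_nondeg_def N_def W_def by (simp add: field_simps)
qed

lemma has_integral_sum_consecutive:
  fixes f :: "real \<Rightarrow> real" and q :: "nat \<Rightarrow> real"
  assumes "\<And>k. k < n \<Longrightarrow> (f has_integral I k) {q k..q (Suc k)}"
    and "\<And>k. k < n \<Longrightarrow> q k \<le> q (Suc k)"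
  shows "(f has_integral (\<Sum>k<n. I k)) {q 0..q n}"
proof -
  have "(f has_integral (\<Sum>k<n. I k)) {q 0..q n} \<and> q 0 \<le> q n"
    using assms
  proof (induction n)
    case 0
    then show ?case
      using has_integral_refl(1)[of f "q 0"] by simp
  next
    case (Suc n)
    then have IH: "(f has_integral (\<Sum>k<n. I k)) {q 0..q n}" "q 0 \<le> q n"
      by auto
    then have "(f has_integral ((\<Sum>k<n. I k) + I n)) {q 0..q (Suc n)}"
      using has_integral_combine[OF IH(2) _ IH(1) Suc.prems(1)[of n]] Suc.prems(2)[of n] by simp
    then show ?case
      using IH(2) Suc.prems(2)[of n] by simp
  qed
  then show ?thesis ..
qed

text \<open>The weight (17 + 2k)/16 is G times the midpoint of the k-th of the eight pieces
  [(8 + k)/(8G), (9 + k)/(8G)] of [1/G, 2/G].\<close>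
definition weighted_increments :: "(nat \<Rightarrow> real) \<Rightarrow> real" where
  "weighted_increments u = (\<Sum>k<8. (17 + 2 * real k) / 16 * (u (Suc k) - u k))"

lemma has_integral_prob_one_success_le:
  assumes "G \<ge> 2" and "0 < a" and "a < b" and "b < 1" and "\<kappa> \<ge> 0"
    and \<kappa>: "\<And>p. p \<in> {a..b} \<Longrightarrow> \<kappa> * p^G \<le> (\<kappa> - 1) * (1 - (1 - p)^G)"
    and I: "(prob_one_success G has_integral I) {a..b}"
  shows "I \<le> \<kappa> * ((a + b) / 2 * (ln_prob_any_success G b - ln_prob_any_success G a))"
proof -
  define L where "L p = \<kappa> * ln_prob_any_success G p" for p
  have in01: "0 < p" "p < 1" if "p \<in> {a..b}" for p
    using that assms(2,4) by auto
  have "I \<le> (a + b) / 2 * (L b - L a)"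
  proof (rule has_integral_le_of_concave[OF assms(3) _ _ I])
    show "concave_on {a..b} L"
      unfolding L_def using assms(1,5) concave_on_ln_prob_any_success[of G] in01
      by (intro concave_on_cmul) (auto intro: convex_on_subset simp: concave_on_def)
    fix p assume p: "p \<in> {a..b}"
    have "(ln_prob_any_success G has_real_derivative
             real G * (1 - p)^(G - 1) / (1 - (1 - p)^G)) (at p)"
      using has_real_derivative_ln_prob_any_success[OF in01[OF p]] assms(1) by simp
    then show "(L has_real_derivative \<kappa> * (real G * (1 - p)^(G - 1) / (1 - (1 - p)^G))) (at p)"
      unfolding L_def by (rule DERIV_cmult)
    show "prob_one_success G p \<le> p * (\<kappa> * (real G * (1 - p)^(G - 1) / (1 - (1 - p)^G)))"
      using prob_one_success_le[OF in01[OF p] assms(1) \<kappa>[OF p]] .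
  qed
  also have "(a + b) / 2 * (L b - L a)
               = \<kappa> * ((a + b) / 2 * (ln_prob_any_success G b - ln_prob_any_success G a))"
    unfolding L_def right_diff_distrib[symmetric] by (rule mult.left_commute)
  finally show ?thesis .
qed

lemma integral_prob_one_success_le:
  assumes "G \<ge> 3" and "\<kappa> \<ge> 0"
    and \<kappa>: "\<And>p. p \<in> {1/G..2/G} \<Longrightarrow> \<kappa> * p^G \<le> (\<kappa> - 1) * (1 - (1 - p)^G)"
  shows "real G * integral {1/G..2/G} (prob_one_success G)
           \<le> \<kappa> * weighted_increments (\<lambda>k. ln_prob_any_success G ((8 + real k) / (8 * real G)))"
proof -
  define q where "q k = (8 + real k) / (8 * real G)" for k
  define I where "I k = integral {q k..q (Suc k)} (prob_one_success G)" for k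
  have G: "real G > 0" "2 / real G < 1"
    using assms(1) by (auto simp: field_simps)
  have q: "0 < q k" "q k < q (Suc k)" "q 0 = 1/G" "q 8 = 2/G" for k
    unfolding q_def using G by (auto simp: field_simps)
  have q_mono: "q j \<le> q k" if "j \<le> k" for j k
    unfolding q_def using that G by (simp add: divide_right_mono)
  have sub: "{q k..q (Suc k)} \<subseteq> {1/G..2/G}" and q_lt_1: "q (Suc k) < 1" if "k < 8" for k
    using q_mono[of 0 k] q_mono[of "Suc k" 8] that q(3,4) G(2) by auto
  then have I: "(prob_one_success G has_integral I k) {q k..q (Suc k)}" if "k < 8" for k
    unfolding I_def using q(1)[of k] assms(1) that
    by (intro integrable_integral integrable_continuous_interval continuous_on_prob_one_success) auto
  have "(prob_one_success G has_integral (\<Sum>k<8. I k)) {1/G..2/G}"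
    using has_integral_sum_consecutive[of 8 _ I q] I q(2,3,4) less_imp_le by metis
  then have "real G * integral {1/G..2/G} (prob_one_success G) = (\<Sum>k<8. real G * I k)"
    by (simp add: integral_unique sum_distrib_left)
  also have "\<dots> \<le> (\<Sum>k<8. \<kappa> * ((17 + 2 * real k) / 16
                   * (ln_prob_any_success G (q (Suc k)) - ln_prob_any_success G (q k))))"
  proof (rule sum_mono)
    fix k :: nat assume "k \<in> {..<8}"
    then have k: "k < 8"
      by simp
    let ?d = "ln_prob_any_success G (q (Suc k)) - ln_prob_any_success G (q k)"
    have "I k \<le> \<kappa> * ((q k + q (Suc k)) / 2 * ?d)"
      by (rule has_integral_prob_one_success_le[OF _ q(1,2) q_lt_1[OF k] assms(2) _ I[OF k]])
        (use assms(1) in simp, use \<kappa> sub[OF k] in blast)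
    then have "real G * I k \<le> \<kappa> * ((real G * ((q k + q (Suc k)) / 2)) * ?d)"
      using mult_left_mono[of "I k" _ "real G"] G(1) by (simp add: mult_ac)
    also have "real G * ((q k + q (Suc k)) / 2) = (17 + 2 * real k) / 16"
      unfolding q_def using G(1) by (simp add: field_simps)
    finally show "real G * I k \<le> \<kappa> * ((17 + 2 * real k) / 16 * ?d)" .
  qed
  also have "\<dots> = \<kappa> * weighted_increments (\<lambda>k. ln_prob_any_success G ((8 + real k) / (8 * real G)))"
    unfolding weighted_increments_def sum_distrib_left q_def ..
  finally show ?thesis .
qed

section \<open>Numerical bounds for G up to 11\<close>

lemma ln_le_pade:
  fixes r :: real
  assumes "1 \<le> r"
  shows "ln r \<le> (r - 1) * (r + 5) / (2 * (2 * r + 1))"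
proof -
  let ?f = "\<lambda>r. (r - 1) * (r + 5) / (2 * (2 * r + 1)) - ln r"
  have "?f 1 \<le> ?f r"
  proof (rule DERIV_nonneg_imp_nondecreasing[of 1 r ?f])
    fix y :: real assume y: "1 \<le> y" "y \<le> r"
    have "DERIV ?f y :> ((4 * y^2 + 4 * y + 28) / (4 * (2 * y + 1)^2) - 1 / y)"
      using y by (auto intro!: derivative_eq_intros simp: field_simps power2_eq_square)
    moreover have "(4 * y^2 + 4 * y + 28) / (4 * (2 * y + 1)^2) - 1 / y = (y - 1)^3 / (y * (2 * y + 1)^2)"
      using y by (simp add: field_simps) (simp add: algebra_simps eval_nat_numeral)
    moreover have "0 \<le> (y - 1)^3 / (y * (2 * y + 1)^2)"
      using y by simp
    ultimately show "\<exists>e. DERIV ?f y :> e \<and> e \<ge> 0"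
      by auto
  qed (use assms in auto)
  then show ?thesis
    by simp
qed

lemma weighted_increments_ln_le:
  fixes v r :: "nat \<Rightarrow> real"
  assumes pos: "\<forall>k\<in>{..8}. 0 < v k"
    and ratio: "\<forall>k\<in>{..<8}. 1 \<le> r k \<and> v (Suc k) \<le> r k * v k"
  shows "weighted_increments (\<lambda>k. ln (v k))
           \<le> (\<Sum>k<8. (17 + 2 * real k) / 16 * ((r k - 1) * (r k + 5) / (2 * (2 * r k + 1))))"
  unfolding weighted_increments_def
proof (intro sum_mono mult_left_mono)
  fix k :: nat assume "k \<in> {..<8}"
  then have "0 < v k" "0 < v (Suc k)" "1 \<le> r k" "v (Suc k) \<le> r k * v k"
    using pos ratio by auto
  then have "ln (v (Suc k)) - ln (v k) = ln (v (Suc k) / v k)" "v (Suc k) / v k \<le> r k"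
    by (simp_all add: ln_div pos_divide_le_eq)
  then have "ln (v (Suc k)) - ln (v k) \<le> ln (r k)"
    using \<open>0 < v k\<close> \<open>0 < v (Suc k)\<close> \<open>1 \<le> r k\<close> by simp
  then show "ln (v (Suc k)) - ln (v k) \<le> (r k - 1) * (r k + 5) / (2 * (2 * r k + 1))"
    using ln_le_pade[OF \<open>1 \<le> r k\<close>] by linarith
qed simp

lemma weighted_increments_ln_prob_any_success_small:
  assumes "6 \<le> G" and "G \<le> 11"
  shows "weighted_increments (\<lambda>k. ln_prob_any_success G ((8 + real k) / (8 * real G))) \<le> 0.439"
proof -
  let ?S = "\<lambda>G. weighted_increments (\<lambda>k. ln (1 - (1 - (8 + real k) / (8 * real G))^G))"
  \<comment> \<open>Each r k below is W((9 + k)/(8G)) / W((8 + k)/(8G)) rounded up to four decimals.\<close>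
  note numerics = eval_nat_numeral lessThan_Suc atMost_Suc power_divide
  have "?S 6 \<le> 0.439"
    by (rule order.trans[OF weighted_increments_ln_le[where r = "(!) [1.0710, 1.0583, 1.0483, 1.0403,
          1.0337, 1.0283, 1.0238, 1.0200]"]])
      (simp_all add: numerics)
  moreover have "?S 7 \<le> 0.439"
    by (rule order.trans[OF weighted_increments_ln_le[where r = "(!) [1.0706, 1.0581, 1.0482, 1.0402,
          1.0338, 1.0284, 1.0240, 1.0202]"]])
      (simp_all add: numerics)
  moreover have "?S 8 \<le> 0.439"
    by (rule order.trans[OF weighted_increments_ln_le[where r = "(!) [1.0703, 1.0579, 1.0481, 1.0402,
          1.0338, 1.0285, 1.0241, 1.0204]"]])
      (simp_all add: numerics)
  moreover have "?S 9 \<le> 0.439"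
    by (rule order.trans[OF weighted_increments_ln_le[where r = "(!) [1.0701, 1.0577, 1.0480, 1.0402,
          1.0338, 1.0286, 1.0242, 1.0205]"]])
      (simp_all add: numerics)
  moreover have "?S 10 \<le> 0.439"
    by (rule order.trans[OF weighted_increments_ln_le[where r = "(!) [1.0699, 1.0576, 1.0479, 1.0401,
          1.0338, 1.0286, 1.0243, 1.0206]"]])
      (simp_all add: numerics)
  moreover have "?S 11 \<le> 0.439"
    by (rule order.trans[OF weighted_increments_ln_le[where r = "(!) [1.0698, 1.0575, 1.0478, 1.0401,
          1.0338, 1.0286, 1.0243, 1.0207]"]])
      (simp_all add: numerics)
  moreover have "G \<in> {6, 7, 8, 9, 10, 11}"
    using assms by auto
  ultimately show ?thesis
    unfolding ln_prob_any_success_def by auto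
qed

section \<open>The limit of large G\<close>

lemma ln_one_minus_le:
  fixes s :: real
  assumes "0 \<le> s" and "s < 1"
  shows "ln (1 - s) \<le> - s - s^2/2 - s^3/3"
proof -
  let ?f = "\<lambda>s. ln (1 - s) + s + s^2/2 + s^3/3"
  have "?f s \<le> ?f 0"
  proof (rule DERIV_nonpos_imp_nonincreasing[of 0 s ?f])
    fix y assume y: "0 \<le> y" "y \<le> s"
    then have "y < 1"
      using assms by simp
    then have "DERIV ?f y :> - (y^3 / (1 - y))"
      by (auto intro!: derivative_eq_intros simp: field_simps power2_eq_square power3_eq_cube)
    moreover have "- (y^3 / (1 - y)) \<le> 0"
      using y \<open>y < 1\<close> by simp
    ultimately show "\<exists>d. DERIV ?f y :> d \<and> d \<le> 0"
      by auto
  qed (use assms in auto)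
  then show ?thesis
    by simp
qed

lemma ln_one_minus_ge:
  fixes s :: real
  assumes "0 \<le> s" and "s < 1"
  shows "- s - s^2/2 - s^3/3 - s^4 / (4 * (1 - s)) \<le> ln (1 - s)"
proof -
  let ?f = "\<lambda>s. ln (1 - s) + s + s^2/2 + s^3/3 + s^4 / (4 * (1 - s))"
  have "?f 0 \<le> ?f s"
  proof (rule DERIV_nonneg_imp_nondecreasing[of 0 s ?f])
    fix y assume y: "0 \<le> y" "y \<le> s"
    then have "y < 1"
      using assms by simp
    have "1 - 1 / (1 - y) + y + y^2 + (4 * y^3 * (4 - 4 * y) + y^4 * 4) / ((4 - 4 * y) * (4 - 4 * y))
            = y^4 / (4 * (1 - y)^2)"
    proof -
      define z where "z = 1 - y"
      have z: "z > 0" "y = 1 - z"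
        using \<open>y < 1\<close> by (auto simp: z_def)
      show ?thesis
        unfolding z(2) using z(1)
        by (simp add: field_simps) (simp add: algebra_simps power2_eq_square power3_eq_cube power4_eq_xxxx)
    qed
    then have "DERIV ?f y :> y^4 / (4 * (1 - y)^2)"
      using \<open>y < 1\<close> by (auto intro!: derivative_eq_intros)
    then show "\<exists>d. DERIV ?f y :> d \<and> d \<ge> 0"
      by auto
  qed (use assms in auto)
  then show ?thesis
    by simp
qed

lemma ln_one_plus_ge:
  fixes d :: real
  assumes "0 \<le> d"
  shows "d - d^2/2 \<le> ln (1 + d)"
proof -
  let ?f = "\<lambda>d. ln (1 + d) - d + d^2/2"
  have "?f 0 \<le> ?f d"
  proof (rule DERIV_nonneg_imp_nondecreasing[of 0 d ?f])
    fix y assume "0 \<le> y" "y \<le> d"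
    then have "DERIV ?f y :> y^2 / (1 + y)"
      by (auto intro!: derivative_eq_intros simp: field_simps power2_eq_square)
    then show "\<exists>e. DERIV ?f y :> e \<and> e \<ge> 0"
      using \<open>0 \<le> y\<close> by auto
  qed (use assms in auto)
  then show ?thesis
    by simp
qed

lemma one_minus_exp_neg_bounds:
  fixes d :: real
  assumes "0 \<le> d"
  shows "d - d^2/2 \<le> 1 - exp (-d)" and "1 - exp (-d) \<le> d - d^2/2 + d^3/6"
proof -
  obtain t where "exp (-d) = (\<Sum>m<3. (-d)^m / fact m) + exp t / fact 3 * (-d)^3"
    using Maclaurin_exp_le[of "-d" 3] by blast
  moreover have "exp t / fact 3 * (-d)^3 \<le> 0"
    using assms by simp
  ultimately show "d - d^2/2 \<le> 1 - exp (-d)"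
    by (simp add: eval_nat_numeral)
  obtain t where "exp (-d) = (\<Sum>m<4. (-d)^m / fact m) + exp t / fact 4 * (-d)^4"
    using Maclaurin_exp_le[of "-d" 4] by blast
  moreover have "exp t / fact 4 * (-d)^4 \<ge> 0"
    by simp
  ultimately show "1 - exp (-d) \<le> d - d^2/2 + d^3/6"
    by (simp add: eval_nat_numeral)
qed

lemma exp_neg_bounds_of_taylor:
  fixes x c h :: real and n :: nat
  defines "T \<equiv> \<Sum>m<n. x^m / fact m" and "q \<equiv> x^n / fact n"
  assumes "0 \<le> x" and "q < 1" and "c * T \<le> 1 - q" and "1 \<le> (c + h) * T"
  shows "c \<le> exp (-x) \<and> exp (-x) \<le> c + h"
proof -
  obtain s where s: "\<bar>s\<bar> \<le> \<bar>x\<bar>" "exp x = T + exp s / fact n * x^n"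
    unfolding T_def using Maclaurin_exp_le[of x n] by blast
  have T_le: "T \<le> exp x"
    using s(2) assms(3) by simp
  have "exp s \<le> exp x"
    using s(1) assms(3) by simp
  then have "exp s * q \<le> exp x * q"
    by (rule mult_right_mono) (simp add: q_def assms(3))
  moreover have "exp x = T + exp s * q"
    using s(2) by (simp add: q_def)
  ultimately have le_T: "exp x * (1 - q) \<le> T"
    by (simp add: algebra_simps)
  have "0 < exp x * (1 - q)"
    using assms(4) by simp
  then have T_pos: "0 < T"
    using le_T by linarith
  have "c \<le> (1 - q) / T"
    using assms(5) T_pos by (simp add: field_simps)
  also have "\<dots> \<le> (1 - q) / (exp x * (1 - q))"
    using le_T \<open>0 < exp x * (1 - q)\<close> T_pos assms(4) by (intro divide_left_mono) auto
  also have "\<dots> = exp (-x)"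
    using assms(4) by (simp add: exp_minus field_simps)
  finally have "c \<le> exp (-x)" .
  moreover have "exp (-x) \<le> c + h"
  proof -
    have "0 < (c + h) * T"
      using assms(6) by linarith
    then have "0 \<le> c + h"
      using zero_less_mult_pos2[of "c + h" T] T_pos by simp
    then have "1 \<le> (c + h) * exp x"
      using order_trans[OF assms(6) mult_left_mono[OF T_le]] by simp
    then show ?thesis
      by (simp add: exp_minus field_simps)
  qed
  ultimately show ?thesis ..
qed

lemma neg_ln_one_minus_pow_bounds:
  fixes x :: real and G :: nat
  assumes "G \<ge> 12" and "0 \<le> x" and "x \<le> 2"
  defines "t \<equiv> 1 / real G" and "\<delta> \<equiv> - x - real G * ln (1 - x / G)"
  shows "x^2/2 * t + x^3/3 * t^2 \<le> \<delta>" and "\<delta> \<le> x^2/2 * t + x^3/3 * t^2 + 3/10 * x^4 * t^3"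
proof -
  define s where "s = x / G"
  have G: "real G > 0" "real G * t = 1"
    unfolding t_def using assms(1) by auto
  have "s \<le> 2 / 12"
    unfolding s_def using assms by (intro frac_le) auto
  moreover have "0 \<le> s"
    unfolding s_def using assms(2) by simp
  ultimately have s: "0 \<le> s" "s \<le> 1/6" "s < 1"
    by auto
  have Gs: "real G * s = x" "real G * s^2 = x^2 * t" "real G * s^3 = x^3 * t^2" "real G * s^4 = x^4 * t^3"
    unfolding s_def t_def using G by (simp_all add: field_simps power2_eq_square power3_eq_cube power4_eq_xxxx)
  have "real G * ln (1 - s) \<le> real G * (- s - s^2/2 - s^3/3)"
    using ln_one_minus_le[OF s(1,3)] G by (intro mult_left_mono) auto
  then show "x^2/2 * t + x^3/3 * t^2 \<le> \<delta>"
    unfolding \<delta>_def s_def[symmetric] using Gs by (simp add: algebra_simps)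
  have "1 / (4 * (1 - s)) \<le> 3/10"
    using s by (simp add: field_simps)
  then have "s^4 * (1 / (4 * (1 - s))) \<le> s^4 * (3/10)"
    by (rule mult_left_mono) simp
  then have "s^4 / (4 * (1 - s)) \<le> 3/10 * s^4"
    by simp
  then have "- s - s^2/2 - s^3/3 - 3/10 * s^4 \<le> ln (1 - s)"
    using ln_one_minus_ge[OF s(1,3)] by linarith
  then have "real G * (- s - s^2/2 - s^3/3 - 3/10 * s^4) \<le> real G * ln (1 - s)"
    using G by (intro mult_left_mono) auto
  then show "\<delta> \<le> x^2/2 * t + x^3/3 * t^2 + 3/10 * x^4 * t^3"
    unfolding \<delta>_def s_def[symmetric] using Gs by (simp add: algebra_simps)
qed

lemma ln_one_minus_mult_exp_diff:
  fixes c \<delta> :: real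
  assumes "0 < c" and "c < 1" and "0 \<le> \<delta>"
  shows "ln (1 - c * exp (-\<delta>)) - ln (1 - c) = ln (1 + c / (1 - c) * (1 - exp (-\<delta>)))"
proof -
  have "1 - c * exp (-\<delta>) = (1 - c) * (1 + c / (1 - c) * (1 - exp (-\<delta>)))"
    using assms(2) by (simp add: field_simps)
  moreover have "0 \<le> c / (1 - c) * (1 - exp (-\<delta>))"
    using assms by simp
  ultimately show ?thesis
    using assms(2) by (simp add: ln_mult)
qed

lemma minus_half_square_mono:
  fixes y z :: real
  assumes "0 \<le> y" and "y \<le> z" and "z \<le> 1"
  shows "y - y^2/2 \<le> z - z^2/2"
proof -
  have "0 \<le> (z - y) * (1 - (z + y) / 2)"
    using assms by (intro mult_nonneg_nonneg) auto
  also have "(z - y) * (1 - (z + y) / 2) = (z - z^2/2) - (y - y^2/2)"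
    by (simp add: field_simps power2_eq_square)
  finally show ?thesis
    by simp
qed

lemma ln_one_plus_mult_one_minus_exp_ge:
  fixes g \<gamma> d \<delta> :: real
  assumes "0 \<le> g" and "g \<le> \<gamma>" and "\<gamma> \<le> 1"
    and "0 \<le> d" and "d \<le> \<delta>" and "\<delta> \<le> 1"
  shows "g * d - (g + g^2) / 2 * d^2 \<le> ln (1 + \<gamma> * (1 - exp (-\<delta>)))"
proof -
  define E where "E = 1 - exp (-\<delta>)"
  have "d - d^2/2 \<le> \<delta> - \<delta>^2/2"
    using minus_half_square_mono assms(4-6) .
  also have "\<dots> \<le> E"
    unfolding E_def using one_minus_exp_neg_bounds(1) assms(4,5) by simp
  finally have dE: "d - d^2/2 \<le> E" .
  have d_nonneg: "0 \<le> d - d^2/2"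
    using minus_half_square_mono[of 0 d] assms(4-6) by simp
  have E_le: "E \<le> 1"
    unfolding E_def by simp
  have low: "g * (d - d^2/2) \<le> \<gamma> * E"
    using assms(1,2) dE d_nonneg by (intro mult_mono) auto
  have up: "\<gamma> * E \<le> 1"
    using assms(1-3) dE d_nonneg E_le by (simp add: mult_le_one)
  have "g * d \<le> d"
    using assms by (simp add: mult_left_le_one_le order_trans[OF assms(2,3)])
  then have "(g * (d - d^2/2))^2 \<le> (g * d)^2"
    using assms(1,4) d_nonneg by (intro power_mono mult_left_mono) auto
  then have "g * d - (g + g^2) / 2 * d^2 \<le> g * (d - d^2/2) - (g * (d - d^2/2))^2 / 2"
    by (simp add: algebra_simps power_mult_distrib)
  also have "\<dots> \<le> \<gamma> * E - (\<gamma> * E)^2 / 2"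
    using minus_half_square_mono[OF _ low up] assms(1) d_nonneg by simp
  also have "\<dots> \<le> ln (1 + \<gamma> * E)"
    using ln_one_plus_ge[of "\<gamma> * E"] low assms(1) d_nonneg by (simp add: order_trans[OF _ low])
  finally show ?thesis
    unfolding E_def .
qed

lemma ln_one_plus_mult_one_minus_exp_le:
  fixes g \<gamma> \<delta> :: real
  assumes "0 \<le> \<gamma>" and "\<gamma> \<le> g" and "0 \<le> \<delta>"
  shows "ln (1 + \<gamma> * (1 - exp (-\<delta>))) \<le> g * (\<delta> - \<delta>^2/2 + \<delta>^3/6)"
proof -
  have E: "0 \<le> 1 - exp (-\<delta>)"
    using assms(3) by simp
  then have "ln (1 + \<gamma> * (1 - exp (-\<delta>))) \<le> \<gamma> * (1 - exp (-\<delta>))"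
    using assms(1) by (intro ln_add_one_self_le_self) simp
  also have "\<dots> \<le> g * (1 - exp (-\<delta>))"
    using assms(2) E by (rule mult_right_mono)
  also have "\<dots> \<le> g * (\<delta> - \<delta>^2/2 + \<delta>^3/6)"
    using one_minus_exp_neg_bounds(2)[OF assms(3)] assms(1,2) by (intro mult_left_mono) auto
  finally show ?thesis .
qed

lemma cubic_le_of_square_bound:
  fixes a b g t A B C :: real
  assumes "0 \<le> a" and "0 \<le> b" and "0 \<le> g" and "0 < t" and "t \<le> 1/12"
    and "A \<le> g * a" and "B \<le> g * b - (g + g^2) * a^2 / 2"
    and "C \<le> - ((g + g^2) / 2 * (2 * a * b + b^2 / 12))"
  shows "A * t + B * t^2 + C * t^3 \<le> g * (a * t + b * t^2) - (g + g^2) / 2 * (a * t + b * t^2)^2"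
proof -
  have "t^4 \<le> 1/12 * t^3"
    using assms(4,5) by (simp add: power_numeral_reduce mult_right_mono)
  then have "b^2 * t^4 \<le> b^2 / 12 * t^3"
    using mult_left_mono[of "t^4" "1/12 * t^3" "b^2"] by simp
  then have "(a * t + b * t^2)^2 \<le> a^2 * t^2 + (2 * a * b + b^2 / 12) * t^3"
    by (simp add: algebra_simps power2_eq_square power3_eq_cube power4_eq_xxxx)
  then have "(g + g^2) / 2 * (a * t + b * t^2)^2 \<le> (g + g^2) / 2 * (a^2 * t^2 + (2 * a * b + b^2 / 12) * t^3)"
    using assms(3) by (intro mult_left_mono) auto
  moreover have "A * t \<le> g * a * t"
    using mult_right_mono[OF assms(6)] assms(4) by simp
  moreover have "B * t^2 \<le> (g * b - (g + g^2) * a^2 / 2) * t^2"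
    using mult_right_mono[OF assms(7)] by simp
  moreover have "C * t^3 \<le> - ((g + g^2) / 2 * (2 * a * b + b^2 / 12)) * t^3"
    using mult_right_mono[OF assms(8)] assms(4) by simp
  ultimately show ?thesis
    by (simp add: algebra_simps power2_eq_square)
qed

lemma exp_taylor_le_cubic:
  fixes a b e g t \<delta> A B C :: real
  defines "K \<equiv> a + b/12 + e/144"
  assumes "0 \<le> a" and "0 \<le> b" and "0 \<le> e" and "0 \<le> g" and "0 < t" and "t \<le> 1/12"
    and lower: "a * t + b * t^2 \<le> \<delta>" and upper: "\<delta> \<le> a * t + b * t^2 + e * t^3"
    and "g * a \<le> A" and "g * (b - a^2/2) \<le> B" and "g * (e - a * b + K^3 / 6) \<le> C"
  shows "g * (\<delta> - \<delta>^2/2 + \<delta>^3/6) \<le> A * t + B * t^2 + C * t^3"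
proof -
  have "0 \<le> a * t + b * t^2"
    using assms(2,3,6) by simp
  then have sq: "(a * t + b * t^2)^2 \<le> \<delta>^2"
    using lower by (intro power_mono) auto
  have t2: "t^2 \<le> t * (1/12)"
    using assms(6,7) by (simp add: power2_eq_square mult_left_mono)
  have "t^2 \<le> (1/12)^2"
    using assms(6,7) by (intro power_mono) auto
  then have "t * t^2 \<le> t * (1/12)^2"
    using assms(6) by (intro mult_left_mono) auto
  then have t3: "t^3 \<le> t * (1/144)"
    by (simp add: power3_eq_cube power2_eq_square)
  have "b * t^2 \<le> b * (t * (1/12))" "e * t^3 \<le> e * (t * (1/144))"
    using mult_left_mono[OF t2 assms(3)] mult_left_mono[OF t3 assms(4)] .
  then have "a * t + b * t^2 + e * t^3 \<le> K * t"
    unfolding K_def by (simp add: algebra_simps)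
  then have "\<delta>^3 \<le> (K * t)^3"
    using lower upper \<open>0 \<le> a * t + b * t^2\<close> by (intro power_mono) auto
  moreover have "a^2 * t^2 + 2 * a * b * t^3 \<le> (a * t + b * t^2)^2"
  proof -
    have "(a * t + b * t^2)^2 = a^2 * t^2 + 2 * a * b * t^3 + b^2 * t^4"
      by (simp add: algebra_simps power2_eq_square power3_eq_cube power4_eq_xxxx)
    moreover have "0 \<le> b^2 * t^4"
      using assms(6) by simp
    ultimately show ?thesis
      by linarith
  qed
  ultimately have "\<delta> - \<delta>^2/2 + \<delta>^3/6 \<le> a * t + (b - a^2/2) * t^2 + (e - a * b + K^3/6) * t^3"
    using upper sq by (simp add: algebra_simps power_mult_distrib power2_eq_square power3_eq_cube)
  then have "g * (\<delta> - \<delta>^2/2 + \<delta>^3/6)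
               \<le> g * a * t + g * (b - a^2/2) * t^2 + g * (e - a * b + K^3/6) * t^3"
    using assms(5) mult_left_mono by (fastforce simp: algebra_simps)
  also have "\<dots> \<le> A * t + B * t^2 + C * t^3"
    using assms(6,10-12) by (intro add_mono mult_right_mono) auto
  finally show ?thesis .
qed

lemma exp_neg_le_half:
  fixes x :: real
  assumes "1 \<le> x"
  shows "exp (-x) \<le> 1/2"
proof -
  have "2 \<le> exp (1::real)"
    using exp_ge_add_one_self[of 1] by simp
  then have "exp (-1::real) \<le> 1/2"
    by (simp add: exp_minus field_simps)
  moreover have "exp (-x) \<le> exp (-1)"
    using assms by simp
  ultimately show ?thesis
    by linarith
qed

lemma frac_one_minus_mono:
  fixes y z :: real
  assumes "0 \<le> y" and "y \<le> z" and "z < 1"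
  shows "y / (1 - y) \<le> z / (1 - z)"
  using assms by (simp add: frac_le)

lemma ln_one_minus_pow_diff_eq:
  fixes x :: real and G :: nat
  assumes "0 < x" and "x < G"
  defines "\<delta> \<equiv> - x - real G * ln (1 - x / G)"
  shows "ln (1 - (1 - x / G)^G) - ln (1 - exp (-x))
           = ln (1 + exp (-x) / (1 - exp (-x)) * (1 - exp (-\<delta>)))"
proof -
  have s: "0 \<le> x / G" "x / G < 1"
    using assms(1,2) by auto
  have "(1 - x / G)^G = exp (ln (1 - x / G))^G"
    using s by simp
  also have "\<dots> = exp (-x) * exp (-\<delta>)"
    unfolding \<delta>_def by (simp flip: exp_of_nat_mult exp_add)
  finally have pow_eq: "(1 - x / G)^G = exp (-x) * exp (-\<delta>)" .
  have "real G * ln (1 - x / G) \<le> real G * (- (x / G))"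
    using ln_one_minus_pos_upper_bound[OF s] by (intro mult_left_mono) auto
  moreover have "G \<noteq> 0"
    using assms(1,2) by auto
  ultimately have "0 \<le> \<delta>"
    unfolding \<delta>_def by simp
  then show ?thesis
    unfolding pow_eq using assms(1) by (intro ln_one_minus_mult_exp_diff) auto
qed

lemma cubic_bound_le_one:
  fixes x t :: real
  assumes "0 \<le> x" and "x \<le> 2" and "0 < t" and "t \<le> 1/12"
  shows "x^2/2 * t + x^3/3 * t^2 + 3/10 * x^4 * t^3 \<le> 1"
proof -
  have x: "x^2 \<le> 4" "x^3 \<le> 8" "x^4 \<le> 16"
    using power_mono[OF assms(2), of 2] power_mono[OF assms(2), of 3] power_mono[OF assms(2), of 4] assms(1)
    by auto
  have t: "t^2 \<le> 1/144" "t^3 \<le> 1/1728"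
    using power_mono[OF assms(4), of 2] power_mono[OF assms(4), of 3] assms(3) by (auto simp: power_divide)
  have "x^2/2 * t \<le> 4/2 * (1/12)"
    by (intro mult_mono) (use x assms in auto)
  moreover have "x^3/3 * t^2 \<le> 8/3 * (1/144)"
    by (intro mult_mono) (use x t assms in auto)
  moreover have "3/10 * x^4 * t^3 \<le> 3/10 * 16 * (1/1728)"
    by (intro mult_mono) (use x t assms in auto)
  ultimately show ?thesis
    by linarith
qed

lemma ln_one_minus_pow_diff_ge:
  fixes x c A B C :: real and G :: nat
  defines "g \<equiv> c / (1 - c)" and "a \<equiv> x^2/2" and "b \<equiv> x^3/3"
  assumes "G \<ge> 12" and "1 \<le> x" and "x \<le> 2" and "0 < c" and "c \<le> exp (-x)"
    and "A \<le> g * a" and "B \<le> g * b - (g + g^2) * a^2 / 2"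
    and "C \<le> - ((g + g^2) / 2 * (2 * a * b + b^2 / 12))"
  shows "A * (1/G) + B * (1/G)^2 + C * (1/G)^3 \<le> ln (1 - (1 - x / G)^G) - ln (1 - exp (-x))"
proof -
  define t where "t = 1 / real G"
  define \<delta> where "\<delta> = - x - real G * ln (1 - x / G)"
  define \<gamma> where "\<gamma> = exp (-x) / (1 - exp (-x))"
  have t: "0 < t" "t \<le> 1/12"
    unfolding t_def using assms(4) by (auto simp: field_simps)
  have \<delta>: "a * t + b * t^2 \<le> \<delta>" "\<delta> \<le> 1"
    using neg_ln_one_minus_pow_bounds[OF assms(4), of x] cubic_bound_le_one[of x t] assms(5,6) t
    unfolding a_def b_def t_def \<delta>_def by auto
  have half: "exp (-x) \<le> 1/2"
    using exp_neg_le_half[OF assms(5)] .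
  have "0 < 1 - exp (-x)"
    using assms(5) by simp
  then have "\<gamma> \<le> 1"
    unfolding \<gamma>_def using half by (simp add: pos_divide_le_eq)
  moreover have "g \<le> \<gamma>"
    unfolding g_def \<gamma>_def by (rule frac_one_minus_mono) (use assms(5,7,8) in auto)
  moreover have "c < 1"
    using assms(8) half by linarith
  then have "0 \<le> g"
    unfolding g_def using assms(7) by simp
  ultimately have g: "0 \<le> g" "g \<le> \<gamma>" "\<gamma> \<le> 1"
    by auto
  have ab: "0 \<le> a" "0 \<le> b"
    unfolding a_def b_def using assms(5) by auto
  then have d: "0 \<le> a * t + b * t^2"
    using t by simp
  have "ln (1 - (1 - x / G)^G) - ln (1 - exp (-x)) = ln (1 + \<gamma> * (1 - exp (-\<delta>)))"
    unfolding \<gamma>_def \<delta>_def using assms(4-6) by (intro ln_one_minus_pow_diff_eq) auto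
  moreover have "g * (a * t + b * t^2) - (g + g^2) / 2 * (a * t + b * t^2)^2
                   \<le> ln (1 + \<gamma> * (1 - exp (-\<delta>)))"
    using ln_one_plus_mult_one_minus_exp_ge[OF g d \<delta>] .
  moreover have "A * t + B * t^2 + C * t^3 \<le> g * (a * t + b * t^2) - (g + g^2) / 2 * (a * t + b * t^2)^2"
    using cubic_le_of_square_bound[OF ab g(1) t assms(9-11)] .
  ultimately show ?thesis
    unfolding t_def by linarith
qed

lemma ln_one_minus_pow_diff_le:
  fixes x c A B C :: real and G :: nat
  defines "g \<equiv> c / (1 - c)" and "a \<equiv> x^2/2" and "b \<equiv> x^3/3" and "e \<equiv> 3/10 * x^4"
  assumes "G \<ge> 12" and "1 \<le> x" and "x \<le> 2" and "exp (-x) \<le> c" and "c < 1"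
    and "g * a \<le> A" and "g * (b - a^2/2) \<le> B" and "g * (e - a * b + (a + b/12 + e/144)^3 / 6) \<le> C"
  shows "ln (1 - (1 - x / G)^G) - ln (1 - exp (-x)) \<le> A * (1/G) + B * (1/G)^2 + C * (1/G)^3"
proof -
  define t where "t = 1 / real G"
  define \<delta> where "\<delta> = - x - real G * ln (1 - x / G)"
  define \<gamma> where "\<gamma> = exp (-x) / (1 - exp (-x))"
  have t: "0 < t" "t \<le> 1/12"
    unfolding t_def using assms(5) by (auto simp: field_simps)
  have \<delta>: "a * t + b * t^2 \<le> \<delta>" "\<delta> \<le> a * t + b * t^2 + e * t^3"
    using neg_ln_one_minus_pow_bounds[OF assms(5), of x] assms(6,7)
    unfolding a_def b_def e_def t_def \<delta>_def by auto
  have abe: "0 \<le> a" "0 \<le> b" "0 \<le> e"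
    unfolding a_def b_def e_def using assms(6) by auto
  then have "0 \<le> a * t + b * t^2"
    using t by simp
  then have "0 \<le> \<delta>"
    using \<delta>(1) by linarith
  have "0 < 1 - exp (-x)"
    using assms(6) by simp
  then have "0 \<le> \<gamma>"
    unfolding \<gamma>_def by simp
  moreover have "\<gamma> \<le> g"
    unfolding g_def \<gamma>_def by (rule frac_one_minus_mono) (use assms(8,9) in auto)
  moreover have "0 < c"
    using assms(8) exp_gt_zero[of "-x"] by linarith
  then have "0 \<le> g"
    unfolding g_def using assms(9) by simp
  ultimately have g: "0 \<le> \<gamma>" "\<gamma> \<le> g" "0 \<le> g"
    by auto
  have "ln (1 - (1 - x / G)^G) - ln (1 - exp (-x)) = ln (1 + \<gamma> * (1 - exp (-\<delta>)))"
    unfolding \<gamma>_def \<delta>_def using assms(5-7) by (intro ln_one_minus_pow_diff_eq) auto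
  also have "\<dots> \<le> g * (\<delta> - \<delta>^2/2 + \<delta>^3/6)"
    using ln_one_plus_mult_one_minus_exp_le[OF g(1,2) \<open>0 \<le> \<delta>\<close>] .
  also have "\<dots> \<le> A * t + B * t^2 + C * t^3"
    using exp_taylor_le_cubic[OF abe g(3) t \<delta> assms(10-12)] .
  finally show ?thesis
    unfolding t_def .
qed

lemma weighted_increments_by_parts:
  "weighted_increments u = 31/16 * u 8 - 17/16 * u 0 - (\<Sum>k\<in>{1..<8}. u k) / 8"
  by (simp add: weighted_increments_def eval_nat_numeral lessThan_Suc atLeastLessThanSuc field_simps)

lemma weighted_increments_diff:
  "weighted_increments (\<lambda>k. u k - v k) = weighted_increments u - weighted_increments v"
  unfolding weighted_increments_def sum_subtractf[symmetric]
  by (intro sum.cong refl) (simp add: field_simps)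

lemma weighted_increments_le_of_ends:
  assumes "\<And>k. k < 8 \<Longrightarrow> v k \<le> u k" and "u 8 \<le> v 8"
  shows "weighted_increments u \<le> weighted_increments v"
proof -
  have "(\<Sum>k\<in>{1..<8}. v k) \<le> (\<Sum>k\<in>{1..<8}. u k)"
    using assms(1) by (intro sum_mono) auto
  then show ?thesis
    using assms(1)[of 0] assms(2) unfolding weighted_increments_by_parts by linarith
qed

lemma weighted_increments_cubic:
  "weighted_increments (\<lambda>k. A k * t + B k * t^2 + C k * t^3)
     = weighted_increments A * t + weighted_increments B * t^2 + weighted_increments C * t^3"
  unfolding weighted_increments_def sum_distrib_right sum.distrib[symmetric]
  by (intro sum.cong refl) (simp add: field_simps)

lemma cubic_mono:
  fixes a b c s t :: real
  assumes "0 \<le> a" and "0 \<le> b" and "0 \<le> c" and "0 \<le> s" and "s \<le> t"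
  shows "a * s + b * s^2 + c * s^3 \<le> a * t + b * t^2 + c * t^3"
  using assms by (intro add_mono mult_left_mono power_mono) auto

text \<open>Six-digit certificates: exp_node k is exp(-(8 + k)/8) rounded down; node_coeff_A/B/C are
  the coefficients, in powers of 1/G, of the lower bounds for node_gap G k, k < 8, computed from
  exp_node k, and of the upper bound for node_gap G 8, computed from exp_node 8 + 10^-6, each
  rounded in the safe direction.\<close>
definition exp_node :: "nat \<Rightarrow> real" where
  "exp_node k = [0.367879, 0.324652, 0.286504, 0.252839, 0.223130, 0.196911, 0.173773, 0.153354,
                 0.135335] ! k"

definition node_coeff_A :: "nat \<Rightarrow> real" where
  "node_coeff_A k = [0.290987, 0.304204, 0.313710, 0.319893, 0.323118, 0.323730, 0.322054, 0.318394,
                     0.313038] ! k"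

definition node_coeff_B :: "nat \<Rightarrow> real" where
  "node_coeff_B k = [0.078907, 0.085630, 0.089675, 0.090870, 0.089161, 0.084594, 0.077297, 0.067466,
                     0.104346] ! k"

definition node_coeff_C :: "nat \<Rightarrow> real" where
  "node_coeff_C k = [-0.157708, -0.220465, -0.296190, -0.385174, -0.487411, -0.602605, -0.730192,
                     -0.869354, 0.215871] ! k"

lemma exp_node_bounds:
  assumes "k \<le> 8"
  shows "exp_node k \<le> exp (- ((8 + real k) / 8)) \<and> exp (- ((8 + real k) / 8)) \<le> exp_node k + 0.000001"
proof -
  have "\<forall>k\<in>{..8}.
          exp_node k * (\<Sum>m<14. ((8 + real k) / 8)^m / fact m) \<le> 1 - ((8 + real k) / 8)^14 / fact 14
          \<and> 1 \<le> (exp_node k + 0.000001) * (\<Sum>m<14. ((8 + real k) / 8)^m / fact m)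
          \<and> ((8 + real k) / 8)^14 / fact 14 < 1"
    by (simp add: exp_node_def eval_nat_numeral atMost_Suc lessThan_Suc power_divide)
  then show ?thesis
    using assms by (intro exp_neg_bounds_of_taylor) auto
qed

lemma weighted_increments_ln_one_minus_exp_le:
  "weighted_increments (\<lambda>k. ln (1 - exp (- ((8 + real k) / 8)))) \<le> 0.43697"
proof -
  define v where "v k = 1 - exp (- ((8 + real k) / 8))" for k
  define r :: "nat \<Rightarrow> real" where "r k = [1.068386, 1.056488, 1.047185, 1.039764, 1.033751, 1.028813,
                                       1.024715, 1.021285] ! k" for k
  have num: "\<forall>k\<in>{..<8}. 1 \<le> r k \<and> 1 - exp_node (Suc k) \<le> r k * (1 - (exp_node k + 0.000001))"
    by (simp add: r_def exp_node_def eval_nat_numeral lessThan_Suc)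
  have ratio: "1 \<le> r k \<and> v (Suc k) \<le> r k * v k" if "k < 8" for k
  proof -
    have r: "1 \<le> r k" "1 - exp_node (Suc k) \<le> r k * (1 - (exp_node k + 0.000001))"
      using num that by auto
    have "v (Suc k) \<le> 1 - exp_node (Suc k)"
      using exp_node_bounds[of "Suc k"] that unfolding v_def by simp
    also have "\<dots> \<le> r k * (1 - (exp_node k + 0.000001))"
      by (rule r(2))
    also have "\<dots> \<le> r k * v k"
      using exp_node_bounds[of k] that r(1) unfolding v_def by (intro mult_left_mono) auto
    finally show ?thesis
      using r(1) by simp
  qed
  have "weighted_increments (\<lambda>k. ln (v k))
          \<le> (\<Sum>k<8. (17 + 2 * real k) / 16 * ((r k - 1) * (r k + 5) / (2 * (2 * r k + 1))))"
    by (rule weighted_increments_ln_le) (use ratio in \<open>auto simp: v_def\<close>)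
  also have "\<dots> \<le> 0.43697"
    by (simp add: r_def eval_nat_numeral lessThan_Suc)
  finally show ?thesis
    unfolding v_def .
qed

definition node_gap :: "nat \<Rightarrow> nat \<Rightarrow> real" where
  "node_gap G k = ln_prob_any_success G ((8 + real k) / (8 * real G)) - ln (1 - exp (- ((8 + real k) / 8)))"

lemma node_gap_bounds:
  assumes "G \<ge> 12"
  defines "cubic \<equiv> \<lambda>k. node_coeff_A k * (1/G) + node_coeff_B k * (1/G)^2 + node_coeff_C k * (1/G)^3"
  shows "\<And>k. k < 8 \<Longrightarrow> cubic k \<le> node_gap G k" and "node_gap G 8 \<le> cubic 8"
proof -
  have gap: "node_gap G k = ln (1 - (1 - (8 + real k) / 8 / G)^G) - ln (1 - exp (- ((8 + real k) / 8)))" for k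
    unfolding node_gap_def ln_prob_any_success_def by simp
  define lower_ok where "lower_ok k \<longleftrightarrow>
    (let x = (8 + real k) / 8; c = exp_node k; g = c / (1 - c); a = x^2/2; b = x^3/3 in
      0 < c \<and> node_coeff_A k \<le> g * a \<and> node_coeff_B k \<le> g * b - (g + g^2) * a^2 / 2
      \<and> node_coeff_C k \<le> - ((g + g^2) / 2 * (2 * a * b + b^2 / 12)))" for k
  have "\<forall>k\<in>{..<8}. lower_ok k"
    by (simp add: lower_ok_def Let_def exp_node_def node_coeff_A_def node_coeff_B_def node_coeff_C_def
        eval_nat_numeral lessThan_Suc power_divide)
  note all_ok = this
  show "cubic k \<le> node_gap G k" if "k < 8" for k
  proof -
    define x where "x = (8 + real k) / 8"
    have x: "1 \<le> x" "x \<le> 2"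
      using that by (auto simp: x_def)
    have "lower_ok k"
      using all_ok that by simp
    show ?thesis
      unfolding gap cubic_def x_def[symmetric]
      by (rule ln_one_minus_pow_diff_ge[OF assms(1) x, where c = "exp_node k"])
        (use \<open>lower_ok k\<close> exp_node_bounds[OF less_imp_le[OF that]] in
          \<open>unfold lower_ok_def Let_def x_def, blast+\<close>)
  qed
  have up_ok: "let c = exp_node 8 + 0.000001; g = c / (1 - c); a = 2^2/2; b = 2^3/3; e = 3/10 * 2^4 in
          exp (-2) \<le> c \<and> c < 1 \<and> g * a \<le> node_coeff_A 8 \<and> g * (b - a^2/2) \<le> node_coeff_B 8
          \<and> g * (e - a * b + (a + b/12 + e/144)^3 / 6) \<le> node_coeff_C 8"
    using exp_node_bounds[of 8]
    by (simp add: Let_def exp_node_def node_coeff_A_def node_coeff_B_def node_coeff_C_def power_divide)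
  have gap8: "node_gap G 8 = ln (1 - (1 - 2 / G)^G) - ln (1 - exp (-2))"
    unfolding gap by simp
  show "node_gap G 8 \<le> cubic 8"
    unfolding gap8 cubic_def
    by (rule ln_one_minus_pow_diff_le[OF assms(1), where x = 2 and c = "exp_node 8 + 0.000001"])
      (use up_ok in \<open>unfold Let_def, (blast | simp)+\<close>)
qed

lemma weighted_increments_node_gap_le:
  assumes "G \<ge> 12"
  shows "weighted_increments (node_gap G) \<le> 0.00252"
proof -
  define t where "t = 1 / real G"
  have t: "0 \<le> t" "t \<le> 1/12"
    unfolding t_def using assms by (auto simp: field_simps)
  have "weighted_increments (node_gap G)
          \<le> weighted_increments (\<lambda>k. node_coeff_A k * t + node_coeff_B k * t^2 + node_coeff_C k * t^3)"
    using node_gap_bounds[OF assms] unfolding t_def by (intro weighted_increments_le_of_ends) auto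
  also have "\<dots> = weighted_increments node_coeff_A * t + weighted_increments node_coeff_B * t^2
                   + weighted_increments node_coeff_C * t^3"
    by (rule weighted_increments_cubic)
  also have "\<dots> \<le> weighted_increments node_coeff_A * (1/12) + weighted_increments node_coeff_B * (1/12)^2
                   + weighted_increments node_coeff_C * (1/12)^3"
    by (rule cubic_mono[OF _ _ _ t])
      (simp_all add: weighted_increments_def node_coeff_A_def node_coeff_B_def node_coeff_C_def
        eval_nat_numeral lessThan_Suc)
  also have "\<dots> \<le> 0.00252"
    by (simp add: weighted_increments_def node_coeff_A_def node_coeff_B_def node_coeff_C_def
        eval_nat_numeral lessThan_Suc)
  finally show ?thesis .
qed

lemma weighted_increments_ln_prob_any_success_large:
  assumes "G \<ge> 12"
  shows "weighted_increments (\<lambda>k. ln_prob_any_success G ((8 + real k) / (8 * real G))) \<le> 0.4396"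
proof -
  have "weighted_increments (node_gap G)
          = weighted_increments (\<lambda>k. ln_prob_any_success G ((8 + real k) / (8 * real G)))
            - weighted_increments (\<lambda>k. ln (1 - exp (- ((8 + real k) / 8))))"
    unfolding node_gap_def by (rule weighted_increments_diff)
  then show ?thesis
    using weighted_increments_node_gap_le[OF assms] weighted_increments_ln_one_minus_exp_le by simp
qed

lemma pow_le_prob_any_success_6:
  fixes p :: real
  assumes "p \<in> {1/6..2/6}"
  shows "1.0021 * p^6 \<le> (1.0021 - 1) * (1 - (1 - p)^6)"
proof -
  have p: "1/6 \<le> p" "p \<le> 1/3"
    using assms by auto
  have "p^6 \<le> (1/3)^6"
    using p by (intro power_mono) auto
  moreover have "(1 - p)^6 \<le> (5/6)^6"
    using p by (intro power_mono) auto
  ultimately show ?thesis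
    by (simp add: power_divide)
qed

lemma pow_le_prob_any_success_ge_7:
  fixes p :: real
  assumes "G \<ge> 7" and "p \<in> {1/G..2/G}"
  shows "1.0004 * p^G \<le> (1.0004 - 1) * (1 - (1 - p)^G)"
proof -
  have p: "1/G \<le> p" "p \<le> 2/G" "0 < p"
    using assms by (auto intro: order.strict_trans2[of 0 "1/G"])
  have "2 / real G \<le> 2/7"
    using assms(1) by (simp add: field_simps)
  then have "p^G \<le> (2/7)^G"
    using p by (intro power_mono) auto
  also have "\<dots> \<le> (2/7)^7"
    using assms(1) by (intro power_decreasing) auto
  also have "\<dots> = 128 / 823543"
    by (simp add: power_divide)
  finally have pG: "p^G \<le> 128 / 823543" .
  have "(1 - p)^G \<le> (1 - 1/G)^G"
    using p \<open>2 / real G \<le> 2/7\<close> by (intro power_mono) auto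
  also have "\<dots> \<le> exp (- (1/G))^G"
    using exp_ge_add_one_self[of "- (1/G)"] assms(1) by (intro power_mono) (auto simp: field_simps)
  also have "\<dots> = exp (-1)"
    using assms(1) by (simp flip: exp_of_nat_mult)
  also have "\<dots> \<le> 1/2"
    using exp_neg_le_half[of 1] by simp
  finally have "(1 - p)^G \<le> 1/2" .
  then show ?thesis
    using pG by simp
qed

lemma integral_prob_one_success_less:
  assumes "G \<ge> 6"
  shows "real G * integral {1/G..2/G} (prob_one_success G) < 0.44"
proof (cases "G = 6")
  case True
  have "real G * integral {1/G..2/G} (prob_one_success G)
          \<le> 1.0021 * weighted_increments (\<lambda>k. ln_prob_any_success G ((8 + real k) / (8 * real G)))"
    using pow_le_prob_any_success_6 True by (intro integral_prob_one_success_le) auto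
  also have "\<dots> \<le> 1.0021 * 0.439"
    using weighted_increments_ln_prob_any_success_small[of G] True by simp
  finally show ?thesis
    by simp
next
  case False
  then have "G \<ge> 7"
    using assms by simp
  have "real G * integral {1/G..2/G} (prob_one_success G)
          \<le> 1.0004 * weighted_increments (\<lambda>k. ln_prob_any_success G ((8 + real k) / (8 * real G)))"
    using pow_le_prob_any_success_ge_7[OF \<open>G \<ge> 7\<close>] \<open>G \<ge> 7\<close>
    by (intro integral_prob_one_success_le) auto
  also have "\<dots> \<le> 1.0004 * 0.4396"
    using weighted_increments_ln_prob_any_success_small[of G]
      weighted_increments_ln_prob_any_success_large[of G] \<open>G \<ge> 7\<close>
    by (cases "G \<le> 11") auto
  finally show ?thesis
    by simp
qed

theorem corollary2:
  fixes G i :: nat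
  assumes "G \<ge> 6" and "i \<in> {1..G}"
  shows "cond_prob_avg G 0 (2 / real G)
           (\<lambda>p. {r. Ahat G i r < Aexp p i r}) > 0.78
       \<and> cond_prob_avg G ((real G - 2) / real G) 1
           (\<lambda>p. {r. Ahat G i r > Aexp p i r}) > 0.78"
proof -
  define J where "J = integral {1/G..2/G} (prob_one_success G)"
  have G3: "G \<ge> 3"
    using assms(1) by simp
  have J: "(prob_one_success G has_integral J) {1/G..2/G}"
    unfolding J_def using integrable_prob_one_success[OF G3] by (rule integrable_integral)
  have "cond_prob_avg G 0 (2 / real G) (\<lambda>p. {r. Ahat G i r < Aexp p i r}) = 1 - G * J / 2"
    using cond_prob_avg_overestimate[OF G3 J] by (simp add: Ahat_less_Aexp_iff)
  moreover have "cond_prob_avg G ((real G - 2) / real G) 1 (\<lambda>p. {r. Ahat G i r > Aexp p i r})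
                   = 1 - G * J / 2"
    using cond_prob_avg_overestimate[OF G3 J] cond_prob_avg_underestimate_eq[of G] G3
    by (simp add: Aexp_less_Ahat_iff)
  moreover have "1 - G * J / 2 > 0.78"
    using integral_prob_one_success_less[OF assms(1)] unfolding J_def by simp
  ultimately show ?thesis
    by simp
qed

end
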